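(* Let $\mathcal{G}=(V,\Sigma,R,S_0)$ be a context-free grammar, $\phi$ a specification, $N$ a natural-language description, and $p_\theta(\cdot\mid\cdot,N)$ a path-conditioned production model as described in the context. Let $\textsc{Infeasible}$ be a predicate on partial programs satisfying: (i) (soundness) if $\textsc{Infeasible}(P,\phi)$ holds, then no completion of $P$ satisfies $\phi$; (ii) (exactness on complete programs) for every complete program $P$, $\textsc{Infeasible}(P,\phi)$ holds if and only if $P\not\models\phi$. Suppose the algorithm $\textsc{OpSynth}$ described in the context (with arbitrary leaf-selection rule and arbitrary tie-breaking in the priority queue) terminates and returns a program $P^*\neq\bot$. Then $P^*$ is a complete program with $P^*\models\phi$, and for every complete program $P$ with $P\models\phi$ we have $p_\theta(P\mid N)\le p_\theta(P^*\mid N)$.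
   Context: Grammar and programs: every production has the form $v\to f(s_1,\dots,s_k)$ with $v\in V$ a nonterminal, $f$ a language construct, and $s_i\in V\cup\Sigma$. A partial program is a finite rooted ordered tree whose nodes are labelled by grammar symbols, the root labelled $S_0$; a node labelled by a nonterminal $v$ is either expanded, meaning it is assigned a production $r=v\to f(s_1,\dots,s_k)$ and has exactly $k$ children labelled $s_1,\dots,s_k$ in order, or unexpanded, in which case it is a leaf. Nodes labelled by terminals are leaves. $\mathcal{C}(P)$ denotes the set of expanded (concrete) nodes, $\mathcal{R}(n)$ the production assigned to $n\in\mathcal{C}(P)$, and $\mathcal{I}(P)$ the set of unexpanded nonterminal leaves (inconcrete nodes). $P$ is complete if $\mathcal{I}(P)=\emptyset$. $\textsc{Expand}(P,l,r)$, for $l\in\mathcal{I}(P)$ labelled $v$ and a production $r$ with left-hand side $v$, assigns $r$ to $l$ and attaches the children given by the right-hand side of $r$. A completion of $P$ is any complete program obtained from $P$ by finitely many $\textsc{Expand}$ operations (a complete $P$ is its own unique completion). AST path: for a node $n$ of $P$, $\pi(P,n)=((n_1,i_1),\dots,(n_k,i_k))$ where $n_1$ is the root, $n_{j+1}$ is the $i_j$-th child of $n_j$, and $n$ is the $i_k$-th child of $n_k$, each $n_j$ recorded together with its assigned production (for the root, $\pi$ is empty). Model: for every nonterminal $v$ and every possible AST path $\pi$ ending at a node labelled $v$, $p_\theta(\cdot\mid\pi,N)$ is a probability distribution on the productions with left-hand side $v$. The score of a partial program is $p_\theta(P\mid N)=\prod_{n\in\mathcal{C}(P)}p_\theta(\mathcal{R}(n)\mid\pi(P,n),N)$,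 and its upper bound is $u_\theta(P\mid N)=p_\theta(P\mid N)\prod_{n\in\mathcal{I}(P)}\max_r p_\theta(r\mid\pi(P,n),N)$. Specification: $\phi$ is a set of examples $\mathcal{E}=\mathcal{E}^+\cup\mathcal{E}^-$ of pairs $(x,y)$; a complete program $P$ satisfies $\phi$ ($P\models\phi$) if $P(x)=y$ for all $(x,y)\in\mathcal{E}^+$ and $P(x)\neq y$ for all $(x,y)\in\mathcal{E}^-$. Algorithm $\textsc{OpSynth}(\mathcal{G},\phi,N,p_\theta)$: initialize a max-priority queue $\mathcal{Q}$ containing the single-node partial program $S_0$ with priority $1$. While $\mathcal{Q}\neq\emptyset$: remove an entry $(P,\rho)$ of maximal priority; if $\textsc{Infeasible}(P,\phi)$, continue to the next iteration; if $P$ is complete, return $P$; otherwise choose some leaf $l\in\mathcal{I}(P)$ (by an arbitrary selection rule) and, for each production $r$ with $p_\theta(r\mid\pi(P,l),N)>0$, insert $P'=\textsc{Expand}(P,l,r)$ into $\mathcal{Q}$ with priority $u_\theta(P'\mid N)$. If the queue becomes empty, return $\bot$. *)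

theory Defs
  imports Complex_Main "HOL-Library.Multiset"
begin

datatype ('v, 't) sym = NT 'v | T 't

datatype ('v, 't, 'f) prod = Prod (lhs: 'v) (con: 'f) (rhs: "('v, 't) sym list")

text \<open>Hole v: unexpanded nonterminal leaf labelled v; Term a: terminal leaf;
  Node r cs: expanded node with assigned production r (its label is lhs r).\<close>
datatype ('v, 't, 'f) tree =
    Hole 'v
  | Term 't
  | Node "('v, 't, 'f) prod" "('v, 't, 'f) tree list"

inductive wf_tree :: "('v, 't, 'f) prod set \<Rightarrow> ('v, 't) sym \<Rightarrow> ('v, 't, 'f) tree \<Rightarrow> bool"
  for R where
  wf_hole: "wf_tree R (NT v) (Hole v)"
| wf_term: "wf_tree R (T a) (Term a)"
| wf_node: "\<lbrakk>r \<in> R; lhs r = v; list_all2 (wf_tree R) (rhs r) cs\<rbrakk>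
            \<Longrightarrow> wf_tree R (NT v) (Node r cs)"

definition partial_program :: "('v, 't, 'f) prod set \<Rightarrow> 'v \<Rightarrow> ('v, 't, 'f) tree \<Rightarrow> bool" where
  "partial_program R S0 P \<longleftrightarrow> wf_tree R (NT S0) P"

text \<open>Nodes are identified by their positions (0-based child index lists).\<close>
fun subtree_at :: "('v, 't, 'f) tree \<Rightarrow> nat list \<Rightarrow> ('v, 't, 'f) tree option" where
  "subtree_at t [] = Some t"
| "subtree_at (Node r cs) (i # is) = (if i < length cs then subtree_at (cs ! i) is else None)"
| "subtree_at _ (_ # _) = None"

fun replace_at :: "('v, 't, 'f) tree \<Rightarrow> nat list \<Rightarrow> ('v, 't, 'f) tree \<Rightarrow> ('v, 't, 'f) tree" where
  "replace_at _ [] s = s"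
| "replace_at (Node r cs) (i # is) s =
     (if i < length cs then Node r (cs[i := replace_at (cs ! i) is s]) else Node r cs)"
| "replace_at t (_ # _) s = t"

definition concrete_nodes :: "('v, 't, 'f) tree \<Rightarrow> nat list set" where
  "concrete_nodes P = {pos. \<exists>r cs. subtree_at P pos = Some (Node r cs)}"

definition inconcrete_nodes :: "('v, 't, 'f) tree \<Rightarrow> nat list set" where
  "inconcrete_nodes P = {pos. \<exists>v. subtree_at P pos = Some (Hole v)}"

definition rule_at :: "('v, 't, 'f) tree \<Rightarrow> nat list \<Rightarrow> ('v, 't, 'f) prod" where
  "rule_at P pos = (case subtree_at P pos of Some (Node r cs) \<Rightarrow> r | _ \<Rightarrow> undefined)"

definition hole_label :: "('v, 't, 'f) tree \<Rightarrow> nat list \<Rightarrow> 'v" where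
  "hole_label P pos = (case subtree_at P pos of Some (Hole v) \<Rightarrow> v | _ \<Rightarrow> undefined)"

definition complete :: "('v, 't, 'f) tree \<Rightarrow> bool" where
  "complete P \<longleftrightarrow> inconcrete_nodes P = {}"

text \<open>An AST path: list of (ancestor's production, child index) pairs from the root.\<close>
type_synonym ('v, 't, 'f) astpath = "(('v, 't, 'f) prod \<times> nat) list"

fun ast_path :: "('v, 't, 'f) tree \<Rightarrow> nat list \<Rightarrow> ('v, 't, 'f) astpath" where
  "ast_path _ [] = []"
| "ast_path (Node r cs) (i # is) = (r, i) # (if i < length cs then ast_path (cs ! i) is else [])"
| "ast_path _ (_ # _) = []"

definition path_target :: "'v \<Rightarrow> ('v, 't, 'f) astpath \<Rightarrow> ('v, 't) sym option" where
  "path_target S0 \<pi> =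
     (if \<pi> = [] then Some (NT S0)
      else (let (r, i) = last \<pi> in if i < length (rhs r) then Some (rhs r ! i) else None))"

definition mk_leaf :: "('v, 't) sym \<Rightarrow> ('v, 't, 'f) tree" where
  "mk_leaf s = (case s of NT v \<Rightarrow> Hole v | T a \<Rightarrow> Term a)"

definition expand :: "('v, 't, 'f) tree \<Rightarrow> nat list \<Rightarrow> ('v, 't, 'f) prod \<Rightarrow> ('v, 't, 'f) tree" where
  "expand P l r = replace_at P l (Node r (map mk_leaf (rhs r)))"

definition expand_step :: "('v, 't, 'f) prod set \<Rightarrow> ('v, 't, 'f) tree \<Rightarrow> ('v, 't, 'f) tree \<Rightarrow> bool" where
  "expand_step R P P' \<longleftrightarrow>
     (\<exists>l r. l \<in> inconcrete_nodes P \<and> r \<in> R \<and> lhs r = hole_label P l \<and> P' = expand P l r)"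

definition completion :: "('v, 't, 'f) prod set \<Rightarrow> ('v, 't, 'f) tree \<Rightarrow> ('v, 't, 'f) tree \<Rightarrow> bool" where
  "completion R P Q \<longleftrightarrow> (expand_step R)\<^sup>*\<^sup>* P Q \<and> complete Q"

text \<open>The model: pth N \<pi> r = p_theta(r | \<pi>, N).\<close>
definition is_path_model ::
  "('v, 't, 'f) prod set \<Rightarrow> 'v \<Rightarrow> ('n \<Rightarrow> ('v, 't, 'f) astpath \<Rightarrow> ('v, 't, 'f) prod \<Rightarrow> real) \<Rightarrow> 'n \<Rightarrow> bool" where
  "is_path_model R S0 pth N \<longleftrightarrow>
     (\<forall>\<pi> v. path_target S0 \<pi> = Some (NT v) \<longrightarrow>
        (\<forall>r. pth N \<pi> r \<ge> 0) \<and>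
        (\<forall>r. pth N \<pi> r \<noteq> 0 \<longrightarrow> r \<in> R \<and> lhs r = v) \<and>
        (\<Sum>r\<in>{r \<in> R. lhs r = v}. pth N \<pi> r) = 1)"

definition score :: "('n \<Rightarrow> ('v, 't, 'f) astpath \<Rightarrow> ('v, 't, 'f) prod \<Rightarrow> real) \<Rightarrow> 'n \<Rightarrow> ('v, 't, 'f) tree \<Rightarrow> real" where
  "score pth N P = (\<Prod>n\<in>concrete_nodes P. pth N (ast_path P n) (rule_at P n))"

definition upper_bound ::
  "('v, 't, 'f) prod set \<Rightarrow> ('n \<Rightarrow> ('v, 't, 'f) astpath \<Rightarrow> ('v, 't, 'f) prod \<Rightarrow> real) \<Rightarrow> 'n \<Rightarrow> ('v, 't, 'f) tree \<Rightarrow> real" where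
  "upper_bound R pth N P =
     score pth N P *
     (\<Prod>n\<in>inconcrete_nodes P. Max ((pth N (ast_path P n)) ` {r \<in> R. lhs r = hole_label P n}))"

definition satisfies :: "(('v, 't, 'f) tree \<Rightarrow> 'x \<Rightarrow> 'y) \<Rightarrow> ('x \<times> 'y) set \<Rightarrow> ('x \<times> 'y) set
                         \<Rightarrow> ('v, 't, 'f) tree \<Rightarrow> bool" where
  "satisfies eval Epos Eneg P \<longleftrightarrow>
     (\<forall>(x, y) \<in> Epos. eval P x = y) \<and> (\<forall>(x, y) \<in> Eneg. eval P x \<noteq> y)"

text \<open>Running Q: loop state;
  Returned (Some P): returned P; Returned None: returned bottom.  Any maximal-priority
  entry may be removed (arbitrary tie-breaking) and any inconcrete leaf may be chosen.\<close>
datatype ('v, 't, 'f) opstate =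
    Running "(('v, 't, 'f) tree \<times> real) multiset"
  | Returned "('v, 't, 'f) tree option"

inductive opsynth_step ::
  "('v, 't, 'f) prod set \<Rightarrow> ('n \<Rightarrow> ('v, 't, 'f) astpath \<Rightarrow> ('v, 't, 'f) prod \<Rightarrow> real) \<Rightarrow> 'n
   \<Rightarrow> (('v, 't, 'f) tree \<Rightarrow> bool) \<Rightarrow> ('v, 't, 'f) opstate \<Rightarrow> ('v, 't, 'f) opstate \<Rightarrow> bool"
  for R pth N infeasible where
  empty: "opsynth_step R pth N infeasible (Running {#}) (Returned None)"
| prune: "\<lbrakk>(P, \<rho>) \<in># Q; \<forall>(P', \<rho>') \<in># Q. \<rho>' \<le> \<rho>; infeasible P\<rbrakk>
          \<Longrightarrow> opsynth_step R pth N infeasible (Running Q) (Running (Q - {#(P, \<rho>)#}))"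
| return: "\<lbrakk>(P, \<rho>) \<in># Q; \<forall>(P', \<rho>') \<in># Q. \<rho>' \<le> \<rho>; \<not> infeasible P; complete P\<rbrakk>
          \<Longrightarrow> opsynth_step R pth N infeasible (Running Q) (Returned (Some P))"
| expand: "\<lbrakk>(P, \<rho>) \<in># Q; \<forall>(P', \<rho>') \<in># Q. \<rho>' \<le> \<rho>; \<not> infeasible P; \<not> complete P;
            l \<in> inconcrete_nodes P\<rbrakk>
          \<Longrightarrow> opsynth_step R pth N infeasible (Running Q)
                (Running (Q - {#(P, \<rho>)#} +
                   image_mset (\<lambda>r. (expand P l r, upper_bound R pth N (expand P l r)))
                     (mset_set {r \<in> R. lhs r = hole_label P l \<and> pth N (ast_path P l) r > 0})))"

definition opsynth_returns ::
  "('v, 't, 'f) prod set \<Rightarrow> 'v \<Rightarrow> ('n \<Rightarrow> ('v, 't, 'f) astpath \<Rightarrow> ('v, 't, 'f) prod \<Rightarrow> real) \<Rightarrow> 'n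
   \<Rightarrow> (('v, 't, 'f) tree \<Rightarrow> bool) \<Rightarrow> ('v, 't, 'f) tree option \<Rightarrow> bool" where
  "opsynth_returns R S0 pth N infeasible res \<longleftrightarrow>
     (opsynth_step R pth N infeasible)\<^sup>*\<^sup>* (Running {#(Hole S0, 1)#}) (Returned res)"

end

theory Submission
  imports Defs
begin

text \<open>
  OpSynth is a best-first search whose priorities are admissible: the priority of a partial
  program bounds the score of each of its completions, because the score factorises over the
  nodes of a tree and every hole contributes at most the best production probability available
  there; on complete programs the priority is the exact score. One keeps the invariant that each
  satisfying complete program of positive score extends some queued program: soundness of
  pruning guarantees that no such extension is discarded, and expansion keeps the production
  the program uses at the chosen hole, which has positive probability. When a complete program
  is returned, its score is at least every priority in the queue, hence at least the score of
  every satisfying program.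
\<close>

inductive prefix_tree :: "('v, 't, 'f) tree \<Rightarrow> ('v, 't, 'f) tree \<Rightarrow> bool" where
  prefix_Hole: "prefix_tree (Hole v) t"
| prefix_Term: "prefix_tree (Term a) (Term a)"
| prefix_Node: "list_all2 prefix_tree cs cs' \<Longrightarrow> prefix_tree (Node r cs) (Node r cs')"

fun root_sym :: "('v, 't, 'f) tree \<Rightarrow> ('v, 't) sym" where
  "root_sym (Hole v) = NT v"
| "root_sym (Term a) = T a"
| "root_sym (Node r cs) = NT (lhs r)"

fun hole_free :: "('v, 't, 'f) tree \<Rightarrow> bool" where
  "hole_free (Hole v) = False"
| "hole_free (Term a) = True"
| "hole_free (Node r cs) = (\<forall>c\<in>set cs. hole_free c)"

lemma wf_tree_root_sym: "wf_tree R s t \<Longrightarrow> s = root_sym t"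
  by (induction rule: wf_tree.induct) auto

lemma hole_free_iff: "hole_free t \<longleftrightarrow> (\<nexists>p v. subtree_at t p = Some (Hole v))"
proof (induction t)
  case (Hole v)
  then show ?case by (auto intro: exI[of _ "[]"])
next
  case (Term a)
  then show ?case by (auto elim: subtree_at.elims)
next
  case (Node r cs)
  have "(\<exists>p v. subtree_at (Node r cs) p = Some (Hole v)) \<longleftrightarrow>
        (\<exists>c\<in>set cs. \<exists>p v. subtree_at c p = Some (Hole v))" (is "?L \<longleftrightarrow> ?R")
  proof
    assume ?L
    then obtain p v where "subtree_at (Node r cs) p = Some (Hole v)" by blast
    then obtain i q where "i < length cs" "subtree_at (cs ! i) q = Some (Hole v)"
      by (cases p) (auto split: if_splits)
    then show ?R by (meson nth_mem)
  next
    assume ?R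
    then obtain i p v where "i < length cs" "subtree_at (cs ! i) p = Some (Hole v)"
      by (auto simp: in_set_conv_nth)
    then have "subtree_at (Node r cs) (i # p) = Some (Hole v)" by simp
    then show ?L by blast
  qed
  with Node.IH show ?case by auto
qed

lemma complete_iff_hole_free: "complete t \<longleftrightarrow> hole_free t"
  unfolding complete_def inconcrete_nodes_def hole_free_iff by auto

lemma wf_mk_leaf: "wf_tree R s (mk_leaf s)"
  by (cases s) (auto simp: mk_leaf_def intro: wf_tree.intros)

lemma prefix_tree_mk_leaf: "wf_tree R s t \<Longrightarrow> prefix_tree (mk_leaf s) t"
  by (cases s) (auto simp: mk_leaf_def intro: prefix_tree.intros elim: wf_tree.cases)

lemma upper_bound_complete: "complete P \<Longrightarrow> upper_bound R pth N P = score pth N P"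
  by (simp add: upper_bound_def complete_def)

lemma expand_step_in_child:
  assumes "expand_step R t t'" "i < length cs"
  shows "expand_step R (Node r (cs[i := t])) (Node r (cs[i := t']))"
proof -
  from assms(1) obtain l r' where l: "l \<in> inconcrete_nodes t" "r' \<in> R" "lhs r' = hole_label t l"
    "t' = expand t l r'" unfolding expand_step_def by blast
  show ?thesis
    unfolding expand_step_def
  proof (intro exI conjI)
    show "i # l \<in> inconcrete_nodes (Node r (cs[i := t]))"
      using l(1) assms(2) by (simp add: inconcrete_nodes_def)
    show "lhs r' = hole_label (Node r (cs[i := t])) (i # l)"
      using l(3) assms(2) by (simp add: hole_label_def)
    show "Node r (cs[i := t']) = expand (Node r (cs[i := t])) (i # l) r'"
      using l(4) assms(2) by (simp add: expand_def)
  qed fact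
qed

lemma expand_steps_in_child:
  assumes "(expand_step R)\<^sup>*\<^sup>* t t'" "i < length cs"
  shows "(expand_step R)\<^sup>*\<^sup>* (Node r (cs[i := t])) (Node r (cs[i := t']))"
  using assms(1)
proof (induction rule: rtranclp_induct)
  case (step t' t'')
  have "expand_step R (Node r ((cs[i := t'])[i := t'])) (Node r ((cs[i := t'])[i := t'']))"
    using expand_step_in_child[OF step(2)] assms(2) by simp
  with step(3) show ?case by simp
qed simp

lemma expand_steps_children:
  assumes "list_all2 (expand_step R)\<^sup>*\<^sup>* cs cs'"
  shows "(expand_step R)\<^sup>*\<^sup>* (Node r cs) (Node r cs')"
proof -
  have "(expand_step R)\<^sup>*\<^sup>* (Node r (pre @ cs)) (Node r (pre @ cs'))" for pre
    using assms
  proof (induction arbitrary: pre rule: list_all2_induct)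
    case (Cons c cs c' cs')
    have "(expand_step R)\<^sup>*\<^sup>* (Node r ((pre @ c # cs)[length pre := c]))
                                (Node r ((pre @ c # cs)[length pre := c']))"
      by (rule expand_steps_in_child[OF Cons(1)]) simp
    then have "(expand_step R)\<^sup>*\<^sup>* (Node r (pre @ c # cs)) (Node r (pre @ c' # cs))"
      by (simp add: list_update_append)
    moreover have "(expand_step R)\<^sup>*\<^sup>* (Node r ((pre @ [c']) @ cs)) (Node r ((pre @ [c']) @ cs'))"
      by (rule Cons(3))
    ultimately show ?case by simp
  qed simp
  from this[of "[]"] show ?thesis by simp
qed

lemma expand_steps_from_leaf:
  "wf_tree R s t \<Longrightarrow> hole_free t \<Longrightarrow> (expand_step R)\<^sup>*\<^sup>* (mk_leaf s) t"
proof (induction rule: wf_tree.induct)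
  case (wf_term a)
  then show ?case by (simp add: mk_leaf_def)
next
  case (wf_node r v cs)
  have "expand_step R (Hole v) (Node r (map mk_leaf (rhs r)))"
    unfolding expand_step_def
    by (intro exI[of _ "[]"] exI[of _ r])
       (simp add: inconcrete_nodes_def hole_label_def expand_def wf_node)
  moreover have "list_all2 (expand_step R)\<^sup>*\<^sup>* (map mk_leaf (rhs r)) cs"
    using wf_node(3,4) by (auto simp: list_all2_conv_all_nth)
  then have "(expand_step R)\<^sup>*\<^sup>* (Node r (map mk_leaf (rhs r))) (Node r cs)"
    by (rule expand_steps_children)
  ultimately show ?case by (simp add: mk_leaf_def)
qed simp

lemma prefix_tree_expand_steps:
  "prefix_tree t t' \<Longrightarrow> wf_tree R s t \<Longrightarrow> wf_tree R s t' \<Longrightarrow> hole_free t' \<Longrightarrow>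
   (expand_step R)\<^sup>*\<^sup>* t t'"
proof (induction arbitrary: s rule: prefix_tree.induct)
  case (prefix_Hole v t)
  then have "s = NT v" by (auto elim: wf_tree.cases)
  with expand_steps_from_leaf[OF prefix_Hole(2,3)] show ?case by (simp add: mk_leaf_def)
next
  case (prefix_Node cs cs' r)
  from prefix_Node.prems have "list_all2 (wf_tree R) (rhs r) cs" "list_all2 (wf_tree R) (rhs r) cs'"
    by (auto elim: wf_tree.cases)
  with prefix_Node.IH prefix_Node.prems(3) have "list_all2 (expand_step R)\<^sup>*\<^sup>* cs cs'"
    by (auto simp: list_all2_conv_all_nth)
  then show ?case by (rule expand_steps_children)
qed simp

lemma completion_if_prefix_tree:
  assumes "partial_program R S0 P" "partial_program R S0 Q" "complete Q" "prefix_tree P Q"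
  shows "completion R P Q"
  using assms prefix_tree_expand_steps
  by (auto simp: completion_def partial_program_def complete_iff_hole_free)

lemma path_target_Nil: "path_target S0 [] = Some (NT S0)"
  by (simp add: path_target_def)

lemma path_target_child:
  assumes "list_all2 (wf_tree R) (rhs r) cs" "i < length cs"
  shows "path_target S0 (\<pi> @ [(r, i)]) = Some (rhs r ! i)" "wf_tree R (rhs r ! i) (cs ! i)"
  using assms by (auto simp: path_target_def list_all2_conv_all_nth)

lemma path_target_subtree_at:
  "path_target S0 \<pi> = Some s \<Longrightarrow> wf_tree R s t \<Longrightarrow> subtree_at t p = Some u \<Longrightarrow>
   path_target S0 (\<pi> @ ast_path t p) = Some (root_sym u) \<and> wf_tree R (root_sym u) u"
proof (induction p arbitrary: \<pi> s t)
  case Nil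
  then show ?case using wf_tree_root_sym by fastforce
next
  case (Cons i p)
  from Cons.prems(3) obtain r cs where t: "t = Node r cs" and i: "i < length cs"
    and sub: "subtree_at (cs ! i) p = Some u"
    by (cases t) (auto split: if_splits)
  from Cons.prems(2) t have "list_all2 (wf_tree R) (rhs r) cs" by (auto elim: wf_tree.cases)
  from Cons.IH[OF path_target_child[OF this i] sub] show ?case using t i by simp
qed

lemma wf_tree_replace_at:
  "wf_tree R s t \<Longrightarrow> subtree_at t p = Some u \<Longrightarrow> wf_tree R (root_sym u) x \<Longrightarrow>
   wf_tree R s (replace_at t p x)"
proof (induction p arbitrary: s t)
  case Nil
  then show ?case using wf_tree_root_sym by fastforce
next
  case (Cons i p)
  from Cons.prems(2) obtain r cs where t: "t = Node r cs" and i: "i < length cs"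
    and sub: "subtree_at (cs ! i) p = Some u"
    by (cases t) (auto split: if_splits)
  from Cons.prems(1) t have wf: "list_all2 (wf_tree R) (rhs r) cs" "r \<in> R" "s = NT (lhs r)"
    by (auto elim: wf_tree.cases)
  have "wf_tree R (rhs r ! i) (replace_at (cs ! i) p x)"
    using Cons.IH[OF path_target_child(2)[OF wf(1) i] sub Cons.prems(3)] .
  then have "list_all2 (wf_tree R) ((rhs r)[i := rhs r ! i]) (cs[i := replace_at (cs ! i) p x])"
    by (intro list_all2_update_cong wf)
  then show ?case using t i wf by (auto intro: wf_node)
qed

lemma prefix_tree_subtree_at:
  "prefix_tree t t' \<Longrightarrow> subtree_at t p = Some u \<Longrightarrow>
   \<exists>u'. subtree_at t' p = Some u' \<and> prefix_tree u u' \<and> ast_path t p = ast_path t' p"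
proof (induction p arbitrary: t t')
  case (Cons i p)
  from Cons.prems(2) obtain r cs where t: "t = Node r cs" and i: "i < length cs"
    and sub: "subtree_at (cs ! i) p = Some u"
    by (cases t) (auto split: if_splits)
  from Cons.prems(1) t obtain cs' where t': "t' = Node r cs'" and cs: "list_all2 prefix_tree cs cs'"
    by (auto elim: prefix_tree.cases)
  then have "prefix_tree (cs ! i) (cs' ! i)" "length cs = length cs'"
    using i by (auto simp: list_all2_conv_all_nth)
  with Cons.IH[OF this(1) sub] show ?case using t t' i by auto
qed simp

lemma prefix_tree_replace_at:
  "prefix_tree t t' \<Longrightarrow> subtree_at t p = Some u \<Longrightarrow> subtree_at t' p = Some u' \<Longrightarrow>
   prefix_tree x u' \<Longrightarrow> prefix_tree (replace_at t p x) t'"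
proof (induction p arbitrary: t t')
  case (Cons i p)
  from Cons.prems(2) obtain r cs where t: "t = Node r cs" and i: "i < length cs"
    and sub: "subtree_at (cs ! i) p = Some u"
    by (cases t) (auto split: if_splits)
  from Cons.prems(1) t obtain cs' where t': "t' = Node r cs'" and cs: "list_all2 prefix_tree cs cs'"
    by (auto elim: prefix_tree.cases)
  then have ci: "prefix_tree (cs ! i) (cs' ! i)" and len: "length cs = length cs'"
    using i by (auto simp: list_all2_conv_all_nth)
  have "subtree_at (cs' ! i) p = Some u'" using Cons.prems(3) t' i len by simp
  from Cons.IH[OF ci sub this Cons.prems(4)]
  have "list_all2 prefix_tree (cs[i := replace_at (cs ! i) p x]) (cs'[i := cs' ! i])"
    by (intro list_all2_update_cong cs)
  then show ?case using t t' i by (auto intro: prefix_Node)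
qed simp

lemma path_model_prob_bounds:
  assumes "is_path_model R S0 pth N" "finite R" "path_target S0 \<pi> = Some (NT v)"
  shows "0 \<le> pth N \<pi> r" "pth N \<pi> r \<le> 1"
proof -
  let ?A = "{r \<in> R. lhs r = v}"
  from assms have nonneg: "\<forall>r. 0 \<le> pth N \<pi> r" and supp: "\<forall>r. pth N \<pi> r \<noteq> 0 \<longrightarrow> r \<in> ?A"
    and sum1: "(\<Sum>r\<in>?A. pth N \<pi> r) = 1" unfolding is_path_model_def by blast+
  show "0 \<le> pth N \<pi> r" using nonneg by blast
  show "pth N \<pi> r \<le> 1"
  proof (cases "pth N \<pi> r = 0")
    case False
    then have "pth N \<pi> r \<le> (\<Sum>r\<in>?A. pth N \<pi> r)"
      using supp nonneg assms(2) by (intro member_le_sum) auto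
    with sum1 show ?thesis by simp
  qed simp
qed

lemma path_model_Max_bounds:
  assumes "is_path_model R S0 pth N" "finite R" "path_target S0 \<pi> = Some (NT v)"
  shows "0 \<le> Max (pth N \<pi> ` {r \<in> R. lhs r = v})"
    and "r \<in> R \<Longrightarrow> lhs r = v \<Longrightarrow> pth N \<pi> r \<le> Max (pth N \<pi> ` {r \<in> R. lhs r = v})"
proof -
  let ?A = "{r \<in> R. lhs r = v}"
  have fin: "finite ?A" using assms(2) by simp
  have "(\<Sum>r\<in>?A. pth N \<pi> r) = 1" using assms(1,3) unfolding is_path_model_def by blast
  then have "?A \<noteq> {}" by (intro notI) simp
  then obtain r0 where r0: "r0 \<in> ?A" by blast
  have "0 \<le> pth N \<pi> r0" by (rule path_model_prob_bounds[OF assms])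
  also have "\<dots> \<le> Max (pth N \<pi> ` ?A)" using fin r0 by (intro Max_ge) auto
  finally show "0 \<le> Max (pth N \<pi> ` ?A)" .
  show "r \<in> R \<Longrightarrow> lhs r = v \<Longrightarrow> pth N \<pi> r \<le> Max (pth N \<pi> ` ?A)"
    using fin by (intro Max_ge) auto
qed

fun is_node :: "('v, 't, 'f) tree \<Rightarrow> bool" where
  "is_node (Node r cs) = True"
| "is_node _ = False"

fun is_hole :: "('v, 't, 'f) tree \<Rightarrow> bool" where
  "is_hole (Hole v) = True"
| "is_hole _ = False"

definition positions :: "(('v, 't, 'f) tree \<Rightarrow> bool) \<Rightarrow> ('v, 't, 'f) tree \<Rightarrow> nat list set" where
  "positions K t = {p. \<exists>u. subtree_at t p = Some u \<and> K u}"

text \<open>The weight of the node at position \<open>p\<close> depends on its AST path, taken relative to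
  a path \<open>\<pi>\<close> leading to the root of \<open>t\<close>; this makes the product compositional.\<close>
definition path_prod :: "(('v, 't, 'f) astpath \<Rightarrow> ('v, 't, 'f) tree \<Rightarrow> real) \<Rightarrow>
    (('v, 't, 'f) tree \<Rightarrow> bool) \<Rightarrow> ('v, 't, 'f) astpath \<Rightarrow> ('v, 't, 'f) tree \<Rightarrow> real" where
  "path_prod F K \<pi> t = (\<Prod>p\<in>positions K t. F (\<pi> @ ast_path t p) (the (subtree_at t p)))"

lemma positions_leaf:
  "positions K (Hole v) = (if K (Hole v) then {[]} else {})"
  "positions K (Term a) = (if K (Term a) then {[]} else {})"
  unfolding positions_def by (auto elim: subtree_at.elims)

lemma positions_Node:
  "positions K (Node r cs) =
     (if K (Node r cs) then {[]} else {}) \<union> (\<Union>i<length cs. (#) i ` positions K (cs ! i))"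
  unfolding positions_def
proof (rule set_eqI)
  fix p
  show "p \<in> {p. \<exists>u. subtree_at (Node r cs) p = Some u \<and> K u} \<longleftrightarrow>
        p \<in> (if K (Node r cs) then {[]} else {}) \<union>
             (\<Union>i<length cs. (#) i ` {p. \<exists>u. subtree_at (cs ! i) p = Some u \<and> K u})"
    by (cases p) (auto split: if_splits)
qed

lemma finite_positions: "finite (positions K t)"
  by (induction t) (simp_all add: positions_leaf positions_Node)

lemma path_prod_leaf:
  "path_prod F K \<pi> (Hole v) = (if K (Hole v) then F \<pi> (Hole v) else 1)"
  "path_prod F K \<pi> (Term a) = (if K (Term a) then F \<pi> (Term a) else 1)"
  by (simp_all add: path_prod_def positions_leaf)

lemma path_prod_Node:
  "path_prod F K \<pi> (Node r cs) =
     (if K (Node r cs) then F \<pi> (Node r cs) else 1) *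
     (\<Prod>i<length cs. path_prod F K (\<pi> @ [(r, i)]) (cs ! i))"
proof -
  let ?t = "Node r cs"
  let ?g = "\<lambda>p. F (\<pi> @ ast_path ?t p) (the (subtree_at ?t p))"
  let ?A = "(if K ?t then {[]} else {}) :: nat list set"
  let ?B = "\<Union>i<length cs. (#) i ` positions K (cs ! i)"
  have "path_prod F K \<pi> ?t = prod ?g (?A \<union> ?B)"
    unfolding path_prod_def positions_Node ..
  also have "\<dots> = prod ?g ?A * prod ?g ?B"
    by (rule prod.union_disjoint) (auto simp: finite_positions)
  also have "prod ?g ?A = (if K ?t then F \<pi> ?t else 1)" by simp
  also have "prod ?g ?B = (\<Prod>i<length cs. prod ?g ((#) i ` positions K (cs ! i)))"
    by (rule prod.UNION_disjoint) (auto simp: finite_positions)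
  also have "\<dots> = (\<Prod>i<length cs. path_prod F K (\<pi> @ [(r, i)]) (cs ! i))"
  proof (rule prod.cong[OF refl])
    fix i assume "i \<in> {..<length cs}"
    then have "prod ?g ((#) i ` positions K (cs ! i)) = prod (?g \<circ> (#) i) (positions K (cs ! i))"
      by (intro prod.reindex) simp
    also have "\<dots> = path_prod F K (\<pi> @ [(r, i)]) (cs ! i)"
      unfolding path_prod_def using \<open>i \<in> {..<length cs}\<close> by (intro prod.cong) auto
    finally show "prod ?g ((#) i ` positions K (cs ! i)) = path_prod F K (\<pi> @ [(r, i)]) (cs ! i)" .
  qed
  finally show ?thesis .
qed

lemma concrete_nodes_eq_positions: "concrete_nodes P = positions is_node P"
  unfolding concrete_nodes_def positions_def by (auto elim: is_node.elims)

lemma inconcrete_nodes_eq_positions: "inconcrete_nodes P = positions is_hole P"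
  unfolding inconcrete_nodes_def positions_def by (auto elim: is_hole.elims)

definition path_score ::
  "('n \<Rightarrow> ('v, 't, 'f) astpath \<Rightarrow> ('v, 't, 'f) prod \<Rightarrow> real) \<Rightarrow> 'n \<Rightarrow>
   ('v, 't, 'f) astpath \<Rightarrow> ('v, 't, 'f) tree \<Rightarrow> real" where
  "path_score pth N = path_prod (\<lambda>\<pi> u. pth N \<pi> (rule_at u [])) is_node"

definition hole_bound ::
  "('v, 't, 'f) prod set \<Rightarrow> ('n \<Rightarrow> ('v, 't, 'f) astpath \<Rightarrow> ('v, 't, 'f) prod \<Rightarrow> real) \<Rightarrow> 'n \<Rightarrow>
   ('v, 't, 'f) astpath \<Rightarrow> ('v, 't, 'f) tree \<Rightarrow> real" where
  "hole_bound R pth N =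
     path_prod (\<lambda>\<pi> u. Max (pth N \<pi> ` {r \<in> R. lhs r = hole_label u []})) is_hole"

lemma score_eq_path_score: "score pth N P = path_score pth N [] P"
  unfolding score_def path_score_def path_prod_def concrete_nodes_eq_positions
  by (intro prod.cong) (auto simp: positions_def rule_at_def elim!: is_node.elims)

lemma upper_bound_eq_path_score_hole_bound:
  "upper_bound R pth N P = path_score pth N [] P * hole_bound R pth N [] P"
  unfolding upper_bound_def score_eq_path_score hole_bound_def path_prod_def
    inconcrete_nodes_eq_positions
  by (intro arg_cong[where f = "\<lambda>x. _ * x"] prod.cong)
     (auto simp: positions_def hole_label_def elim!: is_hole.elims)

context
  fixes R :: "('v, 't, 'f) prod set" and S0 :: 'v
    and pth :: "'n \<Rightarrow> ('v, 't, 'f) astpath \<Rightarrow> ('v, 't, 'f) prod \<Rightarrow> real" and N :: 'n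
  assumes model: "is_path_model R S0 pth N" and finR: "finite R"
begin

lemma path_score_hole_bound_bounds:
  "wf_tree R s t \<Longrightarrow> path_target S0 \<pi> = Some s \<Longrightarrow>
   0 \<le> path_score pth N \<pi> t \<and> path_score pth N \<pi> t \<le> 1 \<and> 0 \<le> hole_bound R pth N \<pi> t"
proof (induction arbitrary: \<pi> rule: wf_tree.induct)
  case (wf_hole v)
  then show ?case using path_model_Max_bounds(1)[OF model finR]
    by (simp add: path_score_def hole_bound_def path_prod_leaf hole_label_def)
next
  case (wf_term a)
  then show ?case by (simp add: path_score_def hole_bound_def path_prod_leaf)
next
  case (wf_node r v cs)
  let ?G = "\<lambda>i. path_score pth N (\<pi> @ [(r, i)]) (cs ! i)"
  let ?H = "\<lambda>i. hole_bound R pth N (\<pi> @ [(r, i)]) (cs ! i)"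
  have wf: "list_all2 (wf_tree R) (rhs r) cs"
    using wf_node(3) by (auto simp: list_all2_conv_all_nth)
  have children: "0 \<le> ?G i \<and> ?G i \<le> 1 \<and> 0 \<le> ?H i" if "i < length cs" for i
    using wf_node(3) path_target_child[OF wf that] that by (auto simp: list_all2_conv_all_nth)
  have "path_score pth N \<pi> (Node r cs) = pth N \<pi> r * (\<Prod>i<length cs. ?G i)"
    by (simp add: path_score_def path_prod_Node rule_at_def)
  moreover have "hole_bound R pth N \<pi> (Node r cs) = (\<Prod>i<length cs. ?H i)"
    by (simp add: hole_bound_def path_prod_Node)
  moreover have "0 \<le> pth N \<pi> r" "pth N \<pi> r \<le> 1"
    using path_model_prob_bounds[OF model finR] wf_node(2,4) by simp_all
  moreover have "0 \<le> (\<Prod>i<length cs. ?G i)" "(\<Prod>i<length cs. ?G i) \<le> 1"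
    "0 \<le> (\<Prod>i<length cs. ?H i)"
    using children by (auto intro: prod_nonneg prod_le_1)
  ultimately show ?case by (simp add: mult_le_one)
qed

text \<open>The subtree filling a hole scores the probability of its root production, at most the
  maximum at the hole, times child scores at most \<open>1\<close>.\<close>
lemma path_score_le_Max:
  assumes "wf_tree R (NT v) t" "hole_free t" and pt: "path_target S0 \<pi> = Some (NT v)"
  shows "path_score pth N \<pi> t \<le> Max (pth N \<pi> ` {r \<in> R. lhs r = v})"
proof -
  from assms(1,2) obtain r cs where t: "t = Node r cs" "r \<in> R" "lhs r = v"
    and wf: "list_all2 (wf_tree R) (rhs r) cs"
    by (auto elim!: wf_tree.cases)
  have "path_score pth N \<pi> t = pth N \<pi> r * (\<Prod>i<length cs. path_score pth N (\<pi> @ [(r, i)]) (cs ! i))"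
    by (simp add: t path_score_def path_prod_Node rule_at_def)
  also have "\<dots> \<le> pth N \<pi> r * 1"
  proof (intro mult_left_mono prod_le_1)
    fix i assume "i \<in> {..<length cs}"
    then show "0 \<le> path_score pth N (\<pi> @ [(r, i)]) (cs ! i) \<and>
               path_score pth N (\<pi> @ [(r, i)]) (cs ! i) \<le> 1"
      using path_score_hole_bound_bounds[OF path_target_child(2,1)[OF wf]] by simp
  qed (rule path_model_prob_bounds(1)[OF model finR pt])
  also have "\<dots> \<le> Max (pth N \<pi> ` {r \<in> R. lhs r = v})"
    using path_model_Max_bounds(2)[OF model finR pt t(2,3)] by simp
  finally show ?thesis .
qed

lemma path_score_le_prefix_bound:
  "prefix_tree t' t \<Longrightarrow> wf_tree R s t' \<Longrightarrow> wf_tree R s t \<Longrightarrow> hole_free t \<Longrightarrow>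
   path_target S0 \<pi> = Some s \<Longrightarrow>
   path_score pth N \<pi> t \<le> path_score pth N \<pi> t' * hole_bound R pth N \<pi> t'"
proof (induction arbitrary: s \<pi> rule: prefix_tree.induct)
  case (prefix_Hole v t)
  then have "s = NT v" by (auto elim: wf_tree.cases)
  with prefix_Hole path_score_le_Max show ?case
    by (simp add: path_score_def hole_bound_def path_prod_leaf hole_label_def)
next
  case (prefix_Term a)
  then show ?case by (simp add: path_score_def hole_bound_def path_prod_leaf)
next
  case (prefix_Node cs' cs r)
  let ?G = "\<lambda>t i. path_score pth N (\<pi> @ [(r, i)]) t"
  let ?H = "\<lambda>t i. hole_bound R pth N (\<pi> @ [(r, i)]) t"
  from prefix_Node.prems have wf': "list_all2 (wf_tree R) (rhs r) cs'"
    and wf: "list_all2 (wf_tree R) (rhs r) cs" and s: "s = NT (lhs r)"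
    by (auto elim: wf_tree.cases)
  have len: "length cs = length cs'" using prefix_Node.IH by (simp add: list_all2_conv_all_nth)
  have pt: "path_target S0 \<pi> = Some (NT (lhs r))" using prefix_Node.prems(4) s by simp
  have children: "0 \<le> ?G (cs ! i) i \<and> ?G (cs ! i) i \<le> ?G (cs' ! i) i * ?H (cs' ! i) i"
    if i: "i < length cs'" for i
  proof -
    have i': "i < length cs" using i len by simp
    have IH: "\<And>s \<sigma>. wf_tree R s (cs' ! i) \<Longrightarrow> wf_tree R s (cs ! i) \<Longrightarrow> hole_free (cs ! i) \<Longrightarrow>
        path_target S0 \<sigma> = Some s \<Longrightarrow>
        path_score pth N \<sigma> (cs ! i) \<le> path_score pth N \<sigma> (cs' ! i) * hole_bound R pth N \<sigma> (cs' ! i)"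
      using prefix_Node.IH i by (auto simp: list_all2_conv_all_nth)
    show ?thesis
      using IH[OF path_target_child(2)[OF wf' i] path_target_child(2)[OF wf i']]
        path_target_child(1)[OF wf' i] prefix_Node.prems(3) i'
        path_score_hole_bound_bounds[OF path_target_child(2,1)[OF wf i']]
      by auto
  qed
  have "path_score pth N \<pi> (Node r cs) = pth N \<pi> r * (\<Prod>i<length cs'. ?G (cs ! i) i)"
    by (simp add: path_score_def path_prod_Node rule_at_def len)
  also have "\<dots> \<le> pth N \<pi> r * (\<Prod>i<length cs'. ?G (cs' ! i) i * ?H (cs' ! i) i)"
    using children path_model_prob_bounds(1)[OF model finR pt]
    by (intro mult_left_mono prod_mono) auto
  also have "\<dots> = path_score pth N \<pi> (Node r cs') * hole_bound R pth N \<pi> (Node r cs')"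
    by (simp add: path_score_def hole_bound_def path_prod_Node prod.distrib rule_at_def)
  finally show ?case .
qed

lemma score_bounds:
  assumes "partial_program R S0 P"
  shows "0 \<le> score pth N P" "score pth N P \<le> 1"
  using path_score_hole_bound_bounds[OF assms[unfolded partial_program_def] path_target_Nil]
  by (simp_all add: score_eq_path_score)

lemma score_le_upper_bound:
  assumes "partial_program R S0 P" "partial_program R S0 Q" "complete Q" "prefix_tree P Q"
  shows "score pth N Q \<le> upper_bound R pth N P"
  using path_score_le_prefix_bound[OF assms(4) assms(1,2)[unfolded partial_program_def]
      assms(3)[unfolded complete_iff_hole_free] path_target_Nil]
  by (simp add: score_eq_path_score upper_bound_eq_path_score_hole_bound)

end

lemma partial_program_expand:
  assumes model: "is_path_model R S0 pth N"
    and pp: "partial_program R S0 P" and l: "subtree_at P l = Some (Hole v)"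
    and pos: "0 < pth N (ast_path P l) r"
  shows "partial_program R S0 (expand P l r)"
proof -
  have "path_target S0 (ast_path P l) = Some (NT v)"
    using path_target_subtree_at[OF path_target_Nil pp[unfolded partial_program_def] l] by simp
  then have "r \<in> R" "lhs r = v" using model pos unfolding is_path_model_def by force+
  then have "wf_tree R (NT v) (Node r (map mk_leaf (rhs r)))"
    using wf_mk_leaf by (auto intro!: wf_node simp: list_all2_conv_all_nth)
  then show ?thesis
    using wf_tree_replace_at[OF pp[unfolded partial_program_def] l]
    by (simp add: expand_def partial_program_def)
qed

text \<open>The production that \<open>P0\<close> uses at the hole has positive probability: otherwise its factor
  would make the score of \<open>P0\<close> vanish.\<close>
lemma prefix_tree_expand_towards:
  assumes model: "is_path_model R S0 pth N" and finR: "finite R"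
    and pp: "partial_program R S0 P" and pp0: "partial_program R S0 P0"
    and complete: "complete P0" and pos: "0 < score pth N P0"
    and prefix: "prefix_tree P P0" and l: "subtree_at P l = Some (Hole v)"
  obtains r where "r \<in> R" "lhs r = v" "0 < pth N (ast_path P l) r"
    "prefix_tree (expand P l r) P0"
proof -
  obtain u where u: "subtree_at P0 l = Some u" "ast_path P l = ast_path P0 l"
    using prefix_tree_subtree_at[OF prefix l] by blast
  have pt: "path_target S0 (ast_path P l) = Some (NT v)"
    using path_target_subtree_at[OF path_target_Nil pp[unfolded partial_program_def] l] by simp
  have "path_target S0 (ast_path P0 l) = Some (root_sym u)" "wf_tree R (root_sym u) u"
    using path_target_subtree_at[OF path_target_Nil pp0[unfolded partial_program_def] u(1)] by auto
  moreover have "\<nexists>w. u = Hole w"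
    using complete u(1) by (auto simp: complete_iff_hole_free hole_free_iff)
  ultimately obtain r cs where ur: "u = Node r cs" "r \<in> R" "lhs r = v"
    and wf: "list_all2 (wf_tree R) (rhs r) cs"
    using pt u(2) by (auto elim!: wf_tree.cases)
  have "pth N (ast_path P0 l) r \<noteq> 0"
  proof
    assume "pth N (ast_path P0 l) r = 0"
    moreover have "l \<in> concrete_nodes P0" "rule_at P0 l = r"
      using u(1) ur by (simp_all add: concrete_nodes_def rule_at_def)
    ultimately have "score pth N P0 = 0"
      unfolding score_def concrete_nodes_eq_positions
      by (intro prod_zero) (auto simp: finite_positions concrete_nodes_eq_positions)
    with pos show False by simp
  qed
  with path_model_prob_bounds(1)[OF model finR pt, of r] u(2)
  have "0 < pth N (ast_path P l) r" by simp
  moreover have "prefix_tree (Node r (map mk_leaf (rhs r))) u"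
    using ur wf by (auto intro!: prefix_Node prefix_tree_mk_leaf simp: list_all2_conv_all_nth)
  then have "prefix_tree (expand P l r) P0"
    unfolding expand_def by (rule prefix_tree_replace_at[OF prefix l u(1)])
  ultimately show ?thesis using that ur by blast
qed

text \<open>Admissibility is stated semantically rather than as \<open>\<rho> = upper_bound R pth N P\<close> because
  the initial entry has priority \<open>1\<close>.\<close>
definition admissible_entry ::
  "('v, 't, 'f) prod set \<Rightarrow> 'v \<Rightarrow> ('n \<Rightarrow> ('v, 't, 'f) astpath \<Rightarrow> ('v, 't, 'f) prod \<Rightarrow> real) \<Rightarrow> 'n \<Rightarrow>
   ('v, 't, 'f) tree \<Rightarrow> real \<Rightarrow> bool" where
  "admissible_entry R S0 pth N P \<rho> \<longleftrightarrow>
     partial_program R S0 P \<and> (complete P \<longrightarrow> \<rho> = score pth N P) \<and>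
     (\<forall>Q. partial_program R S0 Q \<and> complete Q \<and> prefix_tree P Q \<longrightarrow> score pth N Q \<le> \<rho>)"

definition queue_invariant ::
  "('v, 't, 'f) prod set \<Rightarrow> 'v \<Rightarrow> ('n \<Rightarrow> ('v, 't, 'f) astpath \<Rightarrow> ('v, 't, 'f) prod \<Rightarrow> real) \<Rightarrow> 'n \<Rightarrow>
   (('v, 't, 'f) tree \<Rightarrow> bool) \<Rightarrow> (('v, 't, 'f) tree \<times> real) multiset \<Rightarrow> bool" where
  "queue_invariant R S0 pth N spec Q \<longleftrightarrow>
     (\<forall>x\<in>#Q. admissible_entry R S0 pth N (fst x) (snd x)) \<and>
     (\<forall>P. partial_program R S0 P \<and> complete P \<and> spec P \<and> 0 < score pth N P \<longrightarrow>
        (\<exists>x\<in>#Q. prefix_tree (fst x) P))"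

definition optimal_program ::
  "('v, 't, 'f) prod set \<Rightarrow> 'v \<Rightarrow> ('n \<Rightarrow> ('v, 't, 'f) astpath \<Rightarrow> ('v, 't, 'f) prod \<Rightarrow> real) \<Rightarrow> 'n \<Rightarrow>
   (('v, 't, 'f) tree \<Rightarrow> bool) \<Rightarrow> ('v, 't, 'f) tree \<Rightarrow> bool" where
  "optimal_program R S0 pth N spec P \<longleftrightarrow>
     partial_program R S0 P \<and> complete P \<and> spec P \<and>
     (\<forall>P'. partial_program R S0 P' \<and> complete P' \<and> spec P' \<longrightarrow> score pth N P' \<le> score pth N P)"

fun search_invariant ::
  "('v, 't, 'f) prod set \<Rightarrow> 'v \<Rightarrow> ('n \<Rightarrow> ('v, 't, 'f) astpath \<Rightarrow> ('v, 't, 'f) prod \<Rightarrow> real) \<Rightarrow> 'n \<Rightarrow>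
   (('v, 't, 'f) tree \<Rightarrow> bool) \<Rightarrow> ('v, 't, 'f) opstate \<Rightarrow> bool" where
  "search_invariant R S0 pth N spec (Running Q) = queue_invariant R S0 pth N spec Q"
| "search_invariant R S0 pth N spec (Returned (Some P)) = optimal_program R S0 pth N spec P"
| "search_invariant R S0 pth N spec (Returned None) = True"

context
  fixes R :: "('v, 't, 'f) prod set" and S0 :: 'v
    and pth :: "'n \<Rightarrow> ('v, 't, 'f) astpath \<Rightarrow> ('v, 't, 'f) prod \<Rightarrow> real" and N :: 'n
    and spec infeasible :: "('v, 't, 'f) tree \<Rightarrow> bool"
  assumes model: "is_path_model R S0 pth N" and finR: "finite R"
    and sound: "\<And>P. partial_program R S0 P \<Longrightarrow> infeasible P \<Longrightarrow> \<not> (\<exists>Q. completion R P Q \<and> spec Q)"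
    and exact: "\<And>P. partial_program R S0 P \<Longrightarrow> complete P \<Longrightarrow> infeasible P \<longleftrightarrow> \<not> spec P"
begin

lemma queue_invariant_initial: "queue_invariant R S0 pth N spec {#(Hole S0, 1)#}"
  using score_bounds(2)[OF model finR]
  by (auto simp: queue_invariant_def admissible_entry_def partial_program_def
      complete_iff_hole_free wf_hole prefix_Hole)

lemma queue_invariant_prune:
  assumes inv: "queue_invariant R S0 pth N spec Q"
    and P: "(P, \<rho>) \<in># Q" and infeasible: "infeasible P"
  shows "queue_invariant R S0 pth N spec (Q - {#(P, \<rho>)#})"
  unfolding queue_invariant_def
proof (intro conjI allI impI)
  show "\<forall>x\<in>#Q - {#(P, \<rho>)#}. admissible_entry R S0 pth N (fst x) (snd x)"
    using inv by (auto simp: queue_invariant_def dest: in_diffD)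
next
  fix P0 assume P0: "partial_program R S0 P0 \<and> complete P0 \<and> spec P0 \<and> 0 < score pth N P0"
  with inv obtain x where x: "x \<in># Q" "prefix_tree (fst x) P0"
    by (auto simp: queue_invariant_def)
  have "x \<noteq> (P, \<rho>)"
  proof
    assume "x = (P, \<rho>)"
    have "partial_program R S0 P"
      using inv P by (auto simp: queue_invariant_def admissible_entry_def)
    with \<open>x = (P, \<rho>)\<close> x(2) P0 have "completion R P P0"
      by (auto intro: completion_if_prefix_tree)
    with sound[OF \<open>partial_program R S0 P\<close> infeasible] P0 show False by blast
  qed
  with x show "\<exists>x\<in>#Q - {#(P, \<rho>)#}. prefix_tree (fst x) P0"
    by (intro bexI[of _ x]) (auto simp: in_diff_count)
qed

text \<open>Every satisfying program of positive score is bounded by the priority of a queued prefix,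
  which is at most the maximal priority \<open>\<rho>\<close>, the exact score of the complete \<open>P\<close>.\<close>
lemma optimal_program_return:
  assumes inv: "queue_invariant R S0 pth N spec Q"
    and P: "(P, \<rho>) \<in># Q" and max: "\<forall>(P', \<rho>')\<in>#Q. \<rho>' \<le> \<rho>"
    and feasible: "\<not> infeasible P" and complete: "complete P"
  shows "optimal_program R S0 pth N spec P"
proof -
  have adm: "\<forall>x\<in>#Q. admissible_entry R S0 pth N (fst x) (snd x)"
    using inv by (simp add: queue_invariant_def)
  have pp: "partial_program R S0 P" and \<rho>: "\<rho> = score pth N P"
    using adm P complete by (auto simp: admissible_entry_def)
  have "score pth N P0 \<le> score pth N P"
    if P0: "partial_program R S0 P0" "complete P0" "spec P0" for P0
  proof (cases "0 < score pth N P0")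
    case True
    with inv P0 obtain x where x: "x \<in># Q" "prefix_tree (fst x) P0"
      by (auto simp: queue_invariant_def)
    with adm P0 have "score pth N P0 \<le> snd x" by (auto simp: admissible_entry_def)
    also have "snd x \<le> \<rho>" using max x(1) by (cases x) fastforce
    finally show ?thesis using \<rho> by simp
  next
    case False
    with score_bounds(1)[OF model finR pp] show ?thesis by linarith
  qed
  with pp complete exact[OF pp complete] feasible show ?thesis
    by (auto simp: optimal_program_def)
qed

lemma admissible_entry_upper_bound:
  assumes "partial_program R S0 P"
  shows "admissible_entry R S0 pth N P (upper_bound R pth N P)"
  using assms score_le_upper_bound[OF model finR assms]
  by (simp add: admissible_entry_def upper_bound_complete)

lemma queue_invariant_expand:
  assumes inv: "queue_invariant R S0 pth N spec Q"
    and P: "(P, \<rho>) \<in># Q" and l: "l \<in> inconcrete_nodes P"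
  shows "queue_invariant R S0 pth N spec
           (Q - {#(P, \<rho>)#} +
              image_mset (\<lambda>r. (expand P l r, upper_bound R pth N (expand P l r)))
                (mset_set {r \<in> R. lhs r = hole_label P l \<and> pth N (ast_path P l) r > 0}))"
    (is "queue_invariant _ _ _ _ _ (?Q' + image_mset ?entry (mset_set ?A))")
proof -
  have pp: "partial_program R S0 P"
    using inv P by (auto simp: queue_invariant_def admissible_entry_def)
  obtain v where v: "subtree_at P l = Some (Hole v)"
    using l by (auto simp: inconcrete_nodes_def)
  have queue': "set_mset (?Q' + image_mset ?entry (mset_set ?A)) = set_mset ?Q' \<union> ?entry ` ?A"
    using finR by simp
  have "admissible_entry R S0 pth N (fst x) (snd x)" if "x \<in> ?entry ` ?A" for x
    using that partial_program_expand[OF model pp v] admissible_entry_upper_bound by auto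
  moreover have "\<exists>x\<in>set_mset ?Q' \<union> ?entry ` ?A. prefix_tree (fst x) P0"
    if P0: "partial_program R S0 P0" "complete P0" "spec P0" "0 < score pth N P0" for P0
  proof -
    from inv P0 obtain x where x: "x \<in># Q" "prefix_tree (fst x) P0"
      by (auto simp: queue_invariant_def)
    show ?thesis
    proof (cases "x = (P, \<rho>)")
      case False
      with x show ?thesis by (intro bexI[of _ x]) (auto simp: in_diff_count)
    next
      case True
      with x obtain r where "r \<in> R" "lhs r = v" "0 < pth N (ast_path P l) r"
        "prefix_tree (expand P l r) P0"
        by (auto elim: prefix_tree_expand_towards[OF model finR pp P0(1,2,4) _ v])
      moreover have "hole_label P l = v" using v by (simp add: hole_label_def)
      ultimately show ?thesis by (intro bexI[of _ "?entry r"]) auto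
    qed
  qed
  moreover have "admissible_entry R S0 pth N (fst x) (snd x)" if "x \<in># ?Q'" for x
    using inv that by (auto simp: queue_invariant_def dest: in_diffD)
  ultimately show ?thesis
    unfolding queue_invariant_def queue' by blast
qed

lemma search_invariant_step:
  "opsynth_step R pth N infeasible s s' \<Longrightarrow> search_invariant R S0 pth N spec s \<Longrightarrow>
   search_invariant R S0 pth N spec s'"
proof (induction rule: opsynth_step.induct)
  case (prune P \<rho> Q)
  then show ?case by (simp add: queue_invariant_prune)
next
  case (return P \<rho> Q)
  then show ?case by (simp add: optimal_program_return)
next
  case (expand P \<rho> Q l)
  then show ?case using queue_invariant_expand[of Q P \<rho> l] by simp
qed simp

lemma search_invariant_reachable:
  assumes "(opsynth_step R pth N infeasible)\<^sup>*\<^sup>* (Running {#(Hole S0, 1)#}) s"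
  shows "search_invariant R S0 pth N spec s"
  using assms
  by (induction rule: rtranclp_induct) (auto intro: search_invariant_step queue_invariant_initial)

end

theorem mainTheorem1:
  fixes R :: "('v, 't, 'f) prod set"
    and S0 :: 'v
    and pth :: "'n \<Rightarrow> ('v, 't, 'f) astpath \<Rightarrow> ('v, 't, 'f) prod \<Rightarrow> real"
    and N :: 'n
    and eval :: "('v, 't, 'f) tree \<Rightarrow> 'x \<Rightarrow> 'y"
    and Epos Eneg :: "('x \<times> 'y) set"
    and infeasible :: "('v, 't, 'f) tree \<Rightarrow> bool"
    and Pstar :: "('v, 't, 'f) tree"
  assumes finR: "finite R"
    and model: "is_path_model R S0 pth N"
    and sound: "\<And>P. partial_program R S0 P \<Longrightarrow> infeasible P \<Longrightarrow>
                   \<not> (\<exists>Q. completion R P Q \<and> satisfies eval Epos Eneg Q)"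
    and exact: "\<And>P. partial_program R S0 P \<Longrightarrow> complete P \<Longrightarrow>
                   (infeasible P \<longleftrightarrow> \<not> satisfies eval Epos Eneg P)"
    and run: "opsynth_returns R S0 pth N infeasible (Some Pstar)"
  shows "partial_program R S0 Pstar \<and> complete Pstar \<and> satisfies eval Epos Eneg Pstar \<and>
         (\<forall>P. partial_program R S0 P \<and> complete P \<and> satisfies eval Epos Eneg P \<longrightarrow>
              score pth N P \<le> score pth N Pstar)"
proof -
  have "search_invariant R S0 pth N (satisfies eval Epos Eneg) (Returned (Some Pstar))"
    using search_invariant_reachable[OF model finR sound exact] run
    unfolding opsynth_returns_def by blast
  then show ?thesis by (simp add: optimal_program_def)
qed

end
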